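(* Let $n\ge 2$ and let $b\in B_n$ be a half-twist with $\pi(b)=(1,n)$. Then $b^2\in A_n$, and there exists $P\in A_n$ such that $b^2=P^{-1}a_{n-1}P$.
   Context: $B_n$ is Artin's braid group with generators $\sigma_1,\dots,\sigma_{n-1}$; $\pi:B_n\to S_n$ is the homomorphism with $\pi(\sigma_i)=(i,i+1)$. A half-twist is an element of the conjugacy class of $\sigma_1$ in $B_n$. For $1\le i\le n-1$ let $a_i=\sigma_1\cdots\sigma_{i-1}\sigma_i^2\sigma_{i-1}^{-1}\cdots\sigma_1^{-1}$, and let $A_n$ be the subgroup of $B_n$ generated by $a_1,\dots,a_{n-1}$ (the "combed braids": braids representable with strings $2,\dots,n$ straight and parallel and only string 1 moving among them); $A_n$ is a free group on $a_1,\dots,a_{n-1}$. *)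

theory Defs
  imports Main "HOL-Combinatorics.Transposition"
begin

text \<open>An element of B_n is
represented by a word in the letters sigma_i^{+1} / sigma_i^{-1}; a letter is a pair
(i, s) where s = True means sigma_i and s = False means sigma_i^{-1}.
Two words represent the same braid iff they are related by braid_eq n, the
congruence generated by free cancellation and the braid relations.\<close>

type_synonym bletter = "nat \<times> bool"
type_synonym bword = "bletter list"

definition valid_word :: "nat \<Rightarrow> bword \<Rightarrow> bool" where
  "valid_word n w \<longleftrightarrow> (\<forall>(i, s) \<in> set w. 1 \<le> i \<and> i < n)"

definition inv_word :: "bword \<Rightarrow> bword" where
  "inv_word w = rev (map (\<lambda>(i, s). (i, \<not> s)) w)"

inductive braid_rel :: "nat \<Rightarrow> bword \<Rightarrow> bword \<Rightarrow> bool" for n where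
  cancel: "1 \<le> i \<Longrightarrow> i < n \<Longrightarrow> braid_rel n [(i, s), (i, \<not> s)] []"
| far_comm: "1 \<le> i \<Longrightarrow> i + 1 < j \<Longrightarrow> j < n \<Longrightarrow>
     braid_rel n [(i, True), (j, True)] [(j, True), (i, True)]"
| braid: "1 \<le> i \<Longrightarrow> i + 1 < n \<Longrightarrow>
     braid_rel n [(i, True), (i+1, True), (i, True)] [(i+1, True), (i, True), (i+1, True)]"

inductive braid_eq :: "nat \<Rightarrow> bword \<Rightarrow> bword \<Rightarrow> bool" for n where
  refl: "braid_eq n w w"
| sym: "braid_eq n u v \<Longrightarrow> braid_eq n v u"
| trans: "braid_eq n u v \<Longrightarrow> braid_eq n v w \<Longrightarrow> braid_eq n u w"
| ctx: "braid_rel n l r \<Longrightarrow> braid_eq n (u @ l @ v) (u @ r @ v)"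

fun perm_of :: "bword \<Rightarrow> nat \<Rightarrow> nat" where
  "perm_of [] = id"
| "perm_of ((i, s) # w) = transpose i (i + 1) \<circ> perm_of w"

definition half_twist :: "nat \<Rightarrow> bword \<Rightarrow> bool" where
  "half_twist n b \<longleftrightarrow> valid_word n b \<and>
     (\<exists>u. valid_word n u \<and> braid_eq n b (u @ [(1, True)] @ inv_word u))"

definition a_word :: "nat \<Rightarrow> bword" where
  "a_word i = map (\<lambda>j. (j, True)) [1..<i] @ [(i, True), (i, True)]
              @ inv_word (map (\<lambda>j. (j, True)) [1..<i])"

fun a_letter :: "nat \<times> bool \<Rightarrow> bword" where
  "a_letter (i, True) = a_word i"
| "a_letter (i, False) = inv_word (a_word i)"

definition in_A :: "nat \<Rightarrow> bword \<Rightarrow> bool" where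
  "in_A n w \<longleftrightarrow> (\<exists>ls. (\<forall>(i, s) \<in> set ls. 1 \<le> i \<and> i < n)
                       \<and> braid_eq n w (concat (map a_letter ls)))"

end

theory Submission
  imports Defs
begin

(* Write b = u sigma_1 u^-1, so that b^2 = u a_1 u^-1; replacing u by u sigma_1 if necessary,
   pi(u) fixes 1 and sends 2 to n. Say that h permutes the twists if, for each k in {2..n}, it
   conjugates a_(k-1) into an A_n-conjugate of a_(pi(h)(k) - 1). Such braids normalise A_n and form
   a monoid containing A_n and, by Artin's formulas for sigma_(i+1)^(+-1) a_j sigma_(i+1)^(-+1), every
   sigma_j with j >= 2. For the transversal p |-> sigma_1 ... sigma_(p-1) of the stabiliser of strand 1,
   every Reidemeister-Schreier generator lies in A_n or is such a sigma_j; hence every braid fixing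
   strand 1, in particular u, permutes the twists, and u a_1 u^-1 is an A_n-conjugate of a_(n-1). *)

declare braid_eq.trans [trans]

lemma braid_eq_context: "braid_eq n l r \<Longrightarrow> braid_eq n (u @ l @ v) (u @ r @ v)"
proof (induction arbitrary: u v rule: braid_eq.induct)
  case (ctx l r u' v')
  have "braid_eq n ((u @ u') @ l @ (v' @ v)) ((u @ u') @ r @ (v' @ v))"
    using ctx by (rule braid_eq.ctx)
  then show ?case by simp
qed (blast intro: braid_eq.intros)+

lemma braid_eq_append: "braid_eq n a b \<Longrightarrow> braid_eq n c d \<Longrightarrow> braid_eq n (a @ c) (b @ d)"
  using braid_eq_context[of n a b "[]" c] braid_eq_context[of n c d b "[]"]
  by (auto intro: braid_eq.trans)

lemma valid_word_Nil [simp]: "valid_word n []"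
  by (simp add: valid_word_def)

lemma valid_word_Cons [simp]: "valid_word n ((i, s) # w) \<longleftrightarrow> 1 \<le> i \<and> i < n \<and> valid_word n w"
  by (auto simp: valid_word_def)

lemma valid_word_append [simp]: "valid_word n (u @ v) \<longleftrightarrow> valid_word n u \<and> valid_word n v"
  by (auto simp: valid_word_def)

lemma inv_word_Nil [simp]: "inv_word [] = []"
  by (simp add: inv_word_def)

lemma inv_word_Cons [simp]: "inv_word ((i, s) # w) = inv_word w @ [(i, \<not> s)]"
  by (simp add: inv_word_def)

lemma inv_word_append [simp]: "inv_word (u @ v) = inv_word v @ inv_word u"
  by (simp add: inv_word_def)

lemma inv_word_inv_word [simp]: "inv_word (inv_word w) = w"
  by (induction w) (auto simp: inv_word_def)

lemma valid_word_inv_word [simp]: "valid_word n (inv_word w) \<longleftrightarrow> valid_word n w"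
  by (auto simp: valid_word_def inv_word_def)

lemma braid_rel_valid_word: "braid_rel n l r \<Longrightarrow> valid_word n l \<and> valid_word n r"
  by (induction rule: braid_rel.induct) auto

lemma braid_eq_valid_word: "braid_eq n u v \<Longrightarrow> valid_word n u \<longleftrightarrow> valid_word n v"
  by (induction rule: braid_eq.induct) (auto dest: braid_rel_valid_word)

lemma braid_eq_cancel_letter: "1 \<le> i \<Longrightarrow> i < n \<Longrightarrow> braid_eq n (u @ (i, s) # (i, \<not> s) # v) (u @ v)"
  using braid_eq.ctx[OF braid_rel.cancel[of i n s], of u v] by simp

lemma braid_eq_cancel_inverse: "valid_word n w \<Longrightarrow> braid_eq n (u @ w @ inv_word w @ v) (u @ v)"
proof (induction w arbitrary: u v)
  case Nil
  show ?case by (simp add: braid_eq.refl)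
next
  case (Cons x w)
  obtain i s where x: "x = (i, s)" by (cases x)
  have "braid_eq n ((u @ [(i, s)]) @ w @ inv_word w @ (i, \<not> s) # v) ((u @ [(i, s)]) @ (i, \<not> s) # v)"
    using Cons.IH[of "u @ [(i, s)]" "(i, \<not> s) # v"] Cons.prems by (simp add: x)
  also have "braid_eq n \<dots> (u @ v)"
    using Cons.prems by (simp add: x braid_eq_cancel_letter)
  finally show ?case by (simp add: x)
qed

lemma braid_eq_cancel_inverse': "valid_word n w \<Longrightarrow> braid_eq n (u @ inv_word w @ w @ v) (u @ v)"
  using braid_eq_cancel_inverse[of n "inv_word w"] by simp

lemma braid_rel_inv_word: "braid_rel n l r \<Longrightarrow> braid_eq n (inv_word l) (inv_word r)"
proof -
  assume rel: "braid_rel n l r"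
  then have "valid_word n l" "valid_word n r"
    using braid_rel_valid_word by auto
  have "braid_eq n (inv_word l) (inv_word l @ r @ inv_word r)"
    using braid_eq.sym[OF braid_eq_cancel_inverse[OF \<open>valid_word n r\<close>, of "inv_word l" "[]"]] by simp
  also have "braid_eq n \<dots> (inv_word l @ l @ inv_word r)"
    using braid_eq.sym[OF braid_eq.ctx[OF rel]] .
  also have "braid_eq n \<dots> (inv_word r)"
    using braid_eq_cancel_inverse'[OF \<open>valid_word n l\<close>, of "[]"] by simp
  finally show ?thesis .
qed

lemma braid_eq_inv_word: "braid_eq n u v \<Longrightarrow> braid_eq n (inv_word u) (inv_word v)"
proof (induction rule: braid_eq.induct)
  case (ctx l r u v)
  show ?case
    using braid_eq_context[OF braid_rel_inv_word[OF ctx], of "inv_word v" "inv_word u"] by simp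
qed (blast intro: braid_eq.intros)+

lemma braid_eq_shift_left:
  assumes "valid_word n a"
  shows "braid_eq n (a @ u) v \<longleftrightarrow> braid_eq n u (inv_word a @ v)"
proof
  assume "braid_eq n (a @ u) v"
  have "braid_eq n u (inv_word a @ a @ u)"
    using braid_eq.sym[OF braid_eq_cancel_inverse'[OF assms, of "[]"]] by simp
  also have "braid_eq n \<dots> (inv_word a @ v)"
    using braid_eq_context[OF \<open>braid_eq n (a @ u) v\<close>, of "inv_word a" "[]"] by simp
  finally show "braid_eq n u (inv_word a @ v)" .
next
  assume "braid_eq n u (inv_word a @ v)"
  then have "braid_eq n (a @ u) (a @ inv_word a @ v)"
    using braid_eq_context[of n u _ a "[]"] by simp
  also have "braid_eq n \<dots> v"
    using braid_eq_cancel_inverse[OF assms, of "[]"] by simp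
  finally show "braid_eq n (a @ u) v" .
qed

lemma braid_eq_shift_right:
  assumes "valid_word n b"
  shows "braid_eq n (u @ b) v \<longleftrightarrow> braid_eq n u (v @ inv_word b)"
  using braid_eq_shift_left[of n "inv_word b" "inv_word u" "inv_word v"] assms
  by (metis braid_eq_inv_word inv_word_append inv_word_inv_word valid_word_inv_word)

lemma braid_eq_intertwine_inverse:
  assumes "valid_word n a" "valid_word n b" "braid_eq n (a @ w) (w @ b)"
  shows "braid_eq n (inv_word a @ w) (w @ inv_word b)"
proof -
  have "braid_eq n (inv_word a @ w @ b) w"
    using assms(3) braid_eq_shift_left[OF assms(1)] braid_eq.sym by blast
  then show ?thesis
    using braid_eq_shift_right[OF assms(2), of "inv_word a @ w"] by simp
qed

lemma braid_eq_conj_append: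
  "valid_word n h \<Longrightarrow>
     braid_eq n (h @ (x @ y) @ inv_word h) ((h @ x @ inv_word h) @ (h @ y @ inv_word h))"
  using braid_eq.sym[OF braid_eq_cancel_inverse'[of n h "h @ x" "y @ inv_word h"]] by simp

lemma braid_eq_conj_append3:
  "valid_word n h \<Longrightarrow>
     braid_eq n (h @ (x @ y @ z) @ inv_word h)
       ((h @ x @ inv_word h) @ (h @ y @ inv_word h) @ (h @ z @ inv_word h))"
  using braid_eq.trans[OF braid_eq_conj_append braid_eq_append[OF braid_eq.refl braid_eq_conj_append]] .

lemma braid_eq_intertwine_append:
  assumes "braid_eq n (a @ x) (x @ b)" "braid_eq n (b @ y) (y @ c)"
  shows "braid_eq n (a @ x @ y) ((x @ y) @ c)"
proof -
  have "braid_eq n ((a @ x) @ y) ((x @ b) @ y)"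
    using braid_eq_context[OF assms(1), of "[]" y] by simp
  also have "braid_eq n \<dots> (x @ y @ c)"
    using braid_eq_context[OF assms(2), of x "[]"] by simp
  finally show ?thesis by simp
qed

lemma braid_eq_conj_of_intertwine:
  assumes "braid_eq n (a @ w) (w @ b)" "valid_word n w"
  shows "braid_eq n (w @ b @ inv_word w) a"
  using assms(1) braid_eq_shift_right[OF assms(2), of a "w @ b"] by (simp add: braid_eq.sym)

lemma braid_eq_letter_inv_word:
  "braid_eq n ((j, \<not> s) # w) (w @ [(j', \<not> s)]) \<Longrightarrow>
     braid_eq n ([(j', s)] @ inv_word w) (inv_word w @ [(j, s)])"
  using braid_eq.sym[OF braid_eq_inv_word] by fastforce

lemma braid_eq_far_commute:
  assumes "1 \<le> i" "i + 1 < j" "j < n"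
  shows "braid_eq n [(i, s), (j, t)] [(j, t), (i, s)]"
proof -
  have TT: "braid_eq n ([(i, True)] @ [(j, True)]) ([(j, True)] @ [(i, True)])"
    using braid_eq.ctx[OF braid_rel.far_comm[OF assms], of "[]" "[]"] by simp
  have FT: "braid_eq n ([(i, False)] @ [(j, True)]) ([(j, True)] @ [(i, False)])"
    using braid_eq_intertwine_inverse[OF _ _ TT] assms by simp
  have TF: "braid_eq n ([(j, False)] @ [(i, True)]) ([(i, True)] @ [(j, False)])"
    using braid_eq_intertwine_inverse[OF _ _ braid_eq.sym[OF TT]] assms by simp
  have FF: "braid_eq n ([(j, False)] @ [(i, False)]) ([(i, False)] @ [(j, False)])"
    using braid_eq_intertwine_inverse[OF _ _ braid_eq.sym[OF FT]] assms by simp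
  show ?thesis
    using TT FT TF FF by (cases s; cases t) (auto intro: braid_eq.sym)
qed

lemma perm_of_append [simp]: "perm_of (u @ v) = perm_of u \<circ> perm_of v"
  by (induction u rule: perm_of.induct) auto

lemma perm_of_inv_word_comp: "perm_of (inv_word w) \<circ> perm_of w = id"
proof (induction w)
  case (Cons x w)
  then show ?case by (cases x) (simp add: fun_eq_iff)
qed simp

lemma perm_of_comp_inv_word: "perm_of w \<circ> perm_of (inv_word w) = id"
  using perm_of_inv_word_comp[of "inv_word w"] by simp

lemma perm_of_braid_eq: "braid_eq n u v \<Longrightarrow> perm_of u = perm_of v"
proof (induction rule: braid_eq.induct)
  case (ctx l r u v)
  then have "perm_of l = perm_of r"
    by (induction rule: braid_rel.induct) (auto simp: fun_eq_iff transpose_def)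
  then show ?case by simp
qed simp_all

lemma perm_of_in_range: "valid_word n w \<Longrightarrow> k \<in> {1..n} \<Longrightarrow> perm_of w k \<in> {1..n}"
proof (induction w)
  case (Cons x w)
  then show ?case by (cases x) (auto simp: transpose_def)
qed simp

section \<open>The generators a_i and the subgroup A_n\<close>

definition ascending_word :: "nat \<Rightarrow> bword" where
  "ascending_word m = map (\<lambda>j. (j, True)) [1..<m]"

lemma ascending_word_Suc: "1 \<le> m \<Longrightarrow> ascending_word (Suc m) = ascending_word m @ [(m, True)]"
  by (simp add: ascending_word_def)

lemma valid_ascending_word: "m \<le> n \<Longrightarrow> valid_word n (ascending_word m)"
  by (auto simp: ascending_word_def valid_word_def)

lemma a_word_ascending: "a_word i = ascending_word i @ [(i, True), (i, True)] @ inv_word (ascending_word i)"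
  by (simp add: a_word_def ascending_word_def)

lemma a_word_Suc:
  "1 \<le> i \<Longrightarrow> a_word (Suc i) =
     ascending_word i @ [(i, True), (i + 1, True), (i + 1, True), (i, False)] @ inv_word (ascending_word i)"
  by (simp add: a_word_ascending ascending_word_Suc)

lemma valid_a_word: "1 \<le> i \<Longrightarrow> i < n \<Longrightarrow> valid_word n (a_word i)"
  by (simp add: a_word_ascending valid_ascending_word)

lemma perm_of_a_word [simp]: "perm_of (a_word i) = id"
  using perm_of_comp_inv_word[of "ascending_word i"]
  by (simp add: a_word_ascending fun_eq_iff comp_def)

lemma ascending_word_commute:
  "m < j \<Longrightarrow> j < n \<Longrightarrow> braid_eq n ((j, s) # ascending_word m) (ascending_word m @ [(j, s)])"
proof (induction m)
  case (Suc m)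
  show ?case
  proof (cases "m = 0")
    case True
    then show ?thesis by (simp add: ascending_word_def braid_eq.refl)
  next
    case False
    have "braid_eq n (((j, s) # ascending_word m) @ [(m, True)]) ((ascending_word m @ [(j, s)]) @ [(m, True)])"
      using braid_eq_append[OF Suc.IH braid_eq.refl] Suc.prems by simp
    also have "braid_eq n \<dots> (ascending_word m @ [(m, True), (j, s)])"
      using braid_eq_context[OF braid_eq.sym[OF braid_eq_far_commute[of m j n True s]], of "ascending_word m" "[]"]
        Suc.prems False by simp
    finally show ?thesis
      using False by (simp add: ascending_word_Suc)
  qed
qed (simp add: ascending_word_def braid_eq.refl)

lemma ascending_word_shift_positive:
  assumes "1 \<le> i" "i + 2 \<le> m" "m \<le> n"
  shows "braid_eq n ((i + 1, True) # ascending_word m) (ascending_word m @ [(i, True)])"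
  using assms(2,3)
proof (induction m rule: dec_induct)
  case base
  have "braid_eq n (((i + 1, True) # ascending_word i) @ [(i, True), (i + 1, True)])
                   ((ascending_word i @ [(i + 1, True)]) @ [(i, True), (i + 1, True)])"
    using braid_eq_append[OF ascending_word_commute[of i "i + 1" n True] braid_eq.refl] base by simp
  also have "braid_eq n \<dots> (ascending_word i @ [(i, True), (i + 1, True), (i, True)])"
    using braid_eq.sym[OF braid_eq.ctx[OF braid_rel.braid[of i n]]] assms(1) base by simp
  finally show ?case
    using assms(1) by (simp add: ascending_word_Suc)
next
  case (step k)
  have "braid_eq n (((i + 1, True) # ascending_word k) @ [(k, True)]) ((ascending_word k @ [(i, True)]) @ [(k, True)])"
    using braid_eq_append[OF step.IH braid_eq.refl] step by simp
  also have "braid_eq n \<dots> (ascending_word k @ [(k, True), (i, True)])"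
    using braid_eq_context[OF braid_eq_far_commute[of i k n True True], of "ascending_word k" "[]"]
      assms(1) step by simp
  finally show ?case
    using assms(1) step by (simp add: ascending_word_Suc)
qed

lemma ascending_word_shift:
  assumes "1 \<le> i" "i + 2 \<le> m" "m \<le> n"
  shows "braid_eq n ((i + 1, s) # ascending_word m) (ascending_word m @ [(i, s)])"
proof (cases s)
  case False
  have "valid_word n (ascending_word m)"
    using assms(3) by (rule valid_ascending_word)
  then show ?thesis
    using braid_eq_intertwine_inverse[of n "[(i + 1, True)]" "[(i, True)]"]
      ascending_word_shift_positive[OF assms] assms False by simp
qed (use ascending_word_shift_positive[OF assms] in simp)

definition A_word :: "bword \<Rightarrow> bword" where
  "A_word ls = concat (map a_letter ls)"

lemma A_word_Nil [simp]: "A_word [] = []"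
  by (simp add: A_word_def)

lemma A_word_Cons [simp]: "A_word (x # ls) = a_letter x @ A_word ls"
  by (simp add: A_word_def)

lemma A_word_append [simp]: "A_word (u @ v) = A_word u @ A_word v"
  by (simp add: A_word_def)

lemma inv_word_A_word: "inv_word (A_word ls) = A_word (inv_word ls)"
proof (induction ls)
  case (Cons x ls)
  then show ?case by (cases x; cases "snd x") (auto simp: A_word_def)
qed simp

lemma valid_A_word: "valid_word n ls \<Longrightarrow> valid_word n (A_word ls)"
proof (induction ls)
  case (Cons x ls)
  then show ?case
    by (cases x; cases "snd x") (auto simp: A_word_def valid_a_word)
qed simp

lemma perm_of_A_word: "perm_of (A_word ls) = id"
proof (induction ls)
  case (Cons x ls)
  have "perm_of (inv_word w) = id" if "perm_of w = id" for w
    using perm_of_inv_word_comp[of w] that by simp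
  with Cons show ?case
    by (cases x; cases "snd x") (auto simp: A_word_def)
qed simp

lemma in_A_iff: "in_A n w \<longleftrightarrow> (\<exists>ls. valid_word n ls \<and> braid_eq n w (A_word ls))"
  by (simp add: in_A_def A_word_def valid_word_def)

lemma in_A_A_word: "valid_word n ls \<Longrightarrow> in_A n (A_word ls)"
  by (auto simp: in_A_iff intro: braid_eq.refl)

lemma in_A_Nil: "in_A n []"
  using in_A_A_word[of n "[]"] by simp

lemma in_A_a_word: "1 \<le> i \<Longrightarrow> i < n \<Longrightarrow> in_A n (a_word i)"
  using in_A_A_word[of n "[(i, True)]"] by simp

lemma in_A_braid_eq: "braid_eq n w w' \<Longrightarrow> in_A n w' \<Longrightarrow> in_A n w"
  by (auto simp: in_A_iff intro: braid_eq.trans)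

lemma in_A_append: "in_A n u \<Longrightarrow> in_A n v \<Longrightarrow> in_A n (u @ v)"
  unfolding in_A_iff by (metis A_word_append braid_eq_append valid_word_append)

lemma in_A_inv_word: "in_A n u \<Longrightarrow> in_A n (inv_word u)"
  unfolding in_A_iff by (metis braid_eq_inv_word inv_word_A_word valid_word_inv_word)

lemma valid_word_if_in_A: "in_A n w \<Longrightarrow> valid_word n w"
  unfolding in_A_iff by (metis braid_eq_valid_word valid_A_word)

lemma perm_of_if_in_A: "in_A n w \<Longrightarrow> perm_of w = id"
  unfolding in_A_iff by (metis perm_of_A_word perm_of_braid_eq)

definition A_conj :: "nat \<Rightarrow> nat \<Rightarrow> bword \<Rightarrow> bool" where
  "A_conj n j w \<longleftrightarrow> (\<exists>P. in_A n P \<and> braid_eq n w (inv_word P @ a_word j @ P))"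

lemma A_conj_a_word: "A_conj n j (a_word j)"
  unfolding A_conj_def using in_A_Nil braid_eq.refl by fastforce

lemma A_conj_braid_eq: "braid_eq n w w' \<Longrightarrow> A_conj n j w' \<Longrightarrow> A_conj n j w"
  unfolding A_conj_def by (blast intro: braid_eq.trans)

lemma A_conj_conj:
  assumes "in_A n Q" "A_conj n j w"
  shows "A_conj n j (inv_word Q @ w @ Q)"
proof -
  obtain P where "in_A n P" and w: "braid_eq n w (inv_word P @ a_word j @ P)"
    using assms(2) by (auto simp: A_conj_def)
  then have "braid_eq n (inv_word Q @ w @ Q) (inv_word (P @ Q) @ a_word j @ (P @ Q))"
    using braid_eq_context[OF w, of "inv_word Q" Q] by simp
  with \<open>in_A n P\<close> assms(1) show ?thesis
    unfolding A_conj_def by (blast intro: in_A_append)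
qed

lemma in_A_if_A_conj: "1 \<le> j \<Longrightarrow> j < n \<Longrightarrow> A_conj n j w \<Longrightarrow> in_A n w"
  unfolding A_conj_def
  by (meson in_A_a_word in_A_append in_A_braid_eq in_A_inv_word)

section \<open>Conjugating the generators by sigma_j\<close>

context
  fixes n i :: nat
  assumes i: "1 \<le> i" "i + 1 < n"
begin

lemma braid_eq_braid_relation:
  "braid_eq n ([(i, True)] @ [(i + 1, True), (i, True)]) ([(i + 1, True), (i, True)] @ [(i + 1, True)])"
  using braid_eq.ctx[OF braid_rel.braid[OF i], of "[]" "[]"] by simp

lemma braid_eq_conj_succ_letter:
  "braid_eq n [(i + 1, True), (i, True), (i + 1, False)] [(i, False), (i + 1, True), (i, True)]"
proof -
  have shifted: "braid_eq n [(i + 1, True), (i, True)] ([(i, False), (i + 1, True), (i, True)] @ [(i + 1, True)])"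
    using braid_eq_braid_relation braid_eq_shift_left[of n "[(i, True)]"] i by simp
  have "braid_eq n [(i, False), (i + 1, True), (i, True)] ([(i + 1, True), (i, True)] @ [(i + 1, False)])"
    using braid_eq.sym[OF shifted]
      braid_eq_shift_right[of n "[(i + 1, True)]" "[(i, False), (i + 1, True), (i, True)]"] i by simp
  then show ?thesis
    by (simp add: braid_eq.sym)
qed

lemma braid_eq_conj_succ_letter_inverse:
  "braid_eq n [(i + 1, False), (i, True), (i + 1, True)] [(i, True), (i + 1, True), (i, False)]"
proof -
  have shifted: "braid_eq n [(i, True), (i + 1, True)] ([(i + 1, False), (i, True), (i + 1, True)] @ [(i, True)])"
    using braid_eq.sym[OF braid_eq_braid_relation] braid_eq_shift_left[of n "[(i + 1, True)]"] i by simp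
  have "braid_eq n [(i + 1, False), (i, True), (i + 1, True)] ([(i, True), (i + 1, True)] @ [(i, False)])"
    using braid_eq.sym[OF shifted]
      braid_eq_shift_right[of n "[(i, True)]" "[(i + 1, False), (i, True), (i + 1, True)]"] i by simp
  then show ?thesis
    by (simp add: braid_eq.sym)
qed

lemma braid_eq_conj_succ_square:
  "braid_eq n [(i + 1, True), (i, True), (i, True), (i + 1, False)] [(i, False), (i + 1, True), (i + 1, True), (i, True)]"
proof -
  have "braid_eq n ([(i + 1, True)] @ ([(i, True)] @ [(i, True)]) @ [(i + 1, False)])
     ([(i + 1, True), (i, True), (i + 1, False)] @ [(i + 1, True), (i, True), (i + 1, False)])"
    using braid_eq_conj_append[of n "[(i + 1, True)]" "[(i, True)]" "[(i, True)]"] i by simp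
  also have "braid_eq n \<dots> ([(i, False), (i + 1, True)] @ (i, True) # (i, \<not> True) # [(i + 1, True), (i, True)])"
    using braid_eq_append[OF braid_eq_conj_succ_letter braid_eq_conj_succ_letter] by simp
  also have "braid_eq n \<dots> ([(i, False), (i + 1, True)] @ [(i + 1, True), (i, True)])"
    using braid_eq_cancel_letter[of i n "[(i, False), (i + 1, True)]" True "[(i + 1, True), (i, True)]"] i
    by simp
  finally show ?thesis by simp
qed

lemma braid_eq_conj_succ_square_inverse:
  "braid_eq n [(i + 1, False), (i, True), (i, True), (i + 1, True)] [(i, True), (i + 1, True), (i + 1, True), (i, False)]"
proof -
  have "braid_eq n ([(i + 1, False)] @ ([(i, True)] @ [(i, True)]) @ [(i + 1, True)])
     ([(i + 1, False), (i, True), (i + 1, True)] @ [(i + 1, False), (i, True), (i + 1, True)])"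
    using braid_eq_conj_append[of n "[(i + 1, False)]" "[(i, True)]" "[(i, True)]"] i by simp
  also have "braid_eq n \<dots> ([(i, True), (i + 1, True)] @ (i, False) # (i, \<not> False) # [(i + 1, True), (i, False)])"
    using braid_eq_append[OF braid_eq_conj_succ_letter_inverse braid_eq_conj_succ_letter_inverse] by simp
  also have "braid_eq n \<dots> ([(i, True), (i + 1, True)] @ [(i + 1, True), (i, False)])"
    using braid_eq_cancel_letter[of i n "[(i, True), (i + 1, True)]" False "[(i + 1, True), (i, False)]"] i
    by simp
  finally show ?thesis by simp
qed

lemma braid_eq_succ_letter_ascending_conj:
  "braid_eq n ((i + 1, s) # ascending_word i @ w @ inv_word (ascending_word i) @ [(i + 1, t)])
              (ascending_word i @ ((i + 1, s) # w @ [(i + 1, t)]) @ inv_word (ascending_word i))"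
proof -
  have left: "braid_eq n ((i + 1, s) # ascending_word i) (ascending_word i @ [(i + 1, s)])"
    using ascending_word_commute i by simp
  have "braid_eq n ((i + 1, \<not> t) # ascending_word i) (ascending_word i @ [(i + 1, \<not> t)])"
    using ascending_word_commute i by simp
  then have "braid_eq n (inv_word (ascending_word i) @ [(i + 1, t)]) ([(i + 1, t)] @ inv_word (ascending_word i))"
    using braid_eq_inv_word by fastforce
  then have "braid_eq n (((i + 1, s) # ascending_word i) @ w @ (inv_word (ascending_word i) @ [(i + 1, t)]))
     ((ascending_word i @ [(i + 1, s)]) @ w @ ([(i + 1, t)] @ inv_word (ascending_word i)))"
    using braid_eq_append[OF left braid_eq_append[OF braid_eq.refl]] by blast
  then show ?thesis by simp
qed

lemma sigma_inv_conj_a_word: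
  "braid_eq n ([(i + 1, False)] @ a_word i @ [(i + 1, True)]) (a_word (i + 1))"
proof -
  have "braid_eq n ([(i + 1, False)] @ a_word i @ [(i + 1, True)])
     (ascending_word i @ [(i + 1, False), (i, True), (i, True), (i + 1, True)] @ inv_word (ascending_word i))"
    using braid_eq_succ_letter_ascending_conj[of False "[(i, True), (i, True)]" True]
    by (simp add: a_word_ascending)
  also have "braid_eq n \<dots> (a_word (i + 1))"
    using braid_eq_context[OF braid_eq_conj_succ_square_inverse] i by (simp add: a_word_Suc)
  finally show ?thesis .
qed

lemma sigma_conj_a_word_Suc:
  "braid_eq n ([(i + 1, True)] @ a_word (i + 1) @ [(i + 1, False)]) (a_word i)"
proof -
  have "braid_eq n (a_word i @ [(i + 1, True)]) ([(i + 1, True)] @ a_word (i + 1))"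
    using sigma_inv_conj_a_word braid_eq_shift_left[of n "[(i + 1, False)]"] i by simp
  then show ?thesis
    using braid_eq_shift_right[of n "[(i + 1, True)]" "a_word i"] i by (simp add: braid_eq.sym)
qed

lemma a_word_conj_Suc_ascending:
  "braid_eq n (inv_word (a_word i) @ a_word (i + 1) @ a_word i)
     (ascending_word i @ [(i, False), (i + 1, True), (i + 1, True), (i, True)] @ inv_word (ascending_word i))"
proof -
  let ?X = "ascending_word i" and ?y = "(i + 1, True)"
  let ?u = "[(i, False), (i, False)]" and ?v = "[(i, True), ?y, ?y, (i, False)]" and ?w = "[(i, True), (i, True)]"
  have X: "valid_word n ?X"
    using i by (simp add: valid_ascending_word)
  have "braid_eq n (?X @ (?u @ ?v @ ?w) @ inv_word ?X) ((?X @ ?u @ inv_word ?X) @ (?X @ (?v @ ?w) @ inv_word ?X))"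
    using braid_eq_conj_append[OF X] .
  also have "braid_eq n \<dots> ((?X @ ?u @ inv_word ?X) @ (?X @ ?v @ inv_word ?X) @ (?X @ ?w @ inv_word ?X))"
    using braid_eq_append[OF braid_eq.refl braid_eq_conj_append[OF X]] .
  finally have "braid_eq n (inv_word (a_word i) @ a_word (i + 1) @ a_word i) (?X @ (?u @ ?v @ ?w) @ inv_word ?X)"
    using i by (simp add: a_word_ascending ascending_word_Suc braid_eq.sym)
  also have "?u @ ?v @ ?w = [(i, False)] @ (i, False) # (i, \<not> False) # [?y, ?y, (i, False), (i, True), (i, True)]"
    by simp
  also have "braid_eq n (?X @ \<dots> @ inv_word ?X) (?X @ ([(i, False), ?y, ?y] @ (i, False) # (i, \<not> False) # [(i, True)]) @ inv_word ?X)"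
    using braid_eq_cancel_letter[of i n "?X @ [(i, False)]" False "[?y, ?y, (i, False), (i, True), (i, True)] @ inv_word ?X"] i
    by simp
  also have "braid_eq n \<dots> (?X @ [(i, False), ?y, ?y, (i, True)] @ inv_word ?X)"
    using braid_eq_cancel_letter[of i n "?X @ [(i, False), ?y, ?y]" False "(i, True) # inv_word ?X"] i
    by simp
  finally show ?thesis .
qed

lemma sigma_conj_a_word:
  "braid_eq n ([(i + 1, True)] @ a_word i @ [(i + 1, False)]) (inv_word (a_word i) @ a_word (i + 1) @ a_word i)"
proof -
  have "braid_eq n ([(i + 1, True)] @ a_word i @ [(i + 1, False)])
     (ascending_word i @ [(i + 1, True), (i, True), (i, True), (i + 1, False)] @ inv_word (ascending_word i))"
    using braid_eq_succ_letter_ascending_conj[of True "[(i, True), (i, True)]" False]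
    by (simp add: a_word_ascending)
  also have "braid_eq n \<dots> (ascending_word i @ [(i, False), (i + 1, True), (i + 1, True), (i, True)] @ inv_word (ascending_word i))"
    using braid_eq_context[OF braid_eq_conj_succ_square] .
  finally show ?thesis
    using braid_eq.sym[OF a_word_conj_Suc_ascending] by (rule braid_eq.trans)
qed

lemma sigma_inv_conj_a_word_Suc:
  "braid_eq n ([(i + 1, False)] @ a_word (i + 1) @ [(i + 1, True)])
     (a_word (i + 1) @ a_word i @ inv_word (a_word (i + 1)))"
proof -
  let ?a = "a_word i" and ?b = "a_word (i + 1)" and ?h = "[(i + 1, False)]"
  let ?c = "[(i + 1, True)] @ ?a @ [(i + 1, False)]"
  have a: "valid_word n ?a"
    using i by (simp add: valid_a_word)
  have h: "valid_word n ?h"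
    using i by simp
  have "braid_eq n (?b @ ?a) (?a @ ?c)"
    using braid_eq.sym[OF sigma_conj_a_word] braid_eq_shift_left[of n "inv_word ?a" "?b @ ?a"] a by simp
  then have b: "braid_eq n ?b (?a @ ?c @ inv_word ?a)"
    using braid_eq_shift_right[OF a] by simp
  have "braid_eq n (?h @ ?b @ inv_word ?h) (?h @ (?a @ ?c @ inv_word ?a) @ inv_word ?h)"
    using braid_eq_context[OF b] .
  also have "braid_eq n \<dots> ((?h @ ?a @ inv_word ?h) @ (?h @ ?c @ inv_word ?h) @ (?h @ inv_word ?a @ inv_word ?h))"
    using braid_eq.trans[OF braid_eq_conj_append[OF h] braid_eq_append[OF braid_eq.refl braid_eq_conj_append[OF h]]] .
  also have "braid_eq n \<dots> (?b @ ?a @ inv_word ?b)"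
  proof -
    have c: "braid_eq n (?h @ ?c @ inv_word ?h) ?a"
      using braid_eq_cancel_letter[of "i + 1" n "[]" False "?a @ [(i + 1, False), (i + 1, True)]"]
        braid_eq_cancel_letter[of "i + 1" n ?a False "[]"] i
      by (auto intro: braid_eq.trans)
    have "braid_eq n (?h @ inv_word ?a @ inv_word ?h) (inv_word ?b)"
      using braid_eq_inv_word[OF sigma_inv_conj_a_word] by simp
    then show ?thesis
      using braid_eq_append[OF sigma_inv_conj_a_word braid_eq_append[OF c]] by simp
  qed
  finally show ?thesis by simp
qed

end

lemma a_word_far_commute:
  assumes "1 \<le> c" "c < n" "2 \<le> j" "j < n" "j \<noteq> c" "j \<noteq> c + 1"
  shows "braid_eq n ([(j, s)] @ a_word c) (a_word c @ [(j, s)])"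
proof -
  have letter_commute: "braid_eq n ([(j', s)] @ [(c, True), (c, True)]) ([(c, True), (c, True)] @ [(j', s)])"
    if "1 \<le> j'" "j' + 1 < c \<or> c + 1 < j'" "j' < n" for j'
  proof -
    have "braid_eq n ([(j', s)] @ [(c, True)]) ([(c, True)] @ [(j', s)])"
      using that braid_eq_far_commute[of j' c n s True] braid_eq_far_commute[of c j' n True s] assms
      by (auto intro: braid_eq.sym)
    then show ?thesis
      using braid_eq_intertwine_append by fastforce
  qed
  obtain j' where
    into: "braid_eq n ([(j, s)] @ ascending_word c) (ascending_word c @ [(j', s)])" and
    out: "braid_eq n ([(j', s)] @ inv_word (ascending_word c)) (inv_word (ascending_word c) @ [(j, s)])" and
    j': "1 \<le> j'" "j' + 1 < c \<or> c + 1 < j'" "j' < n"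
  proof (cases "c + 2 \<le> j")
    case True
    show ?thesis
    proof (rule that)
      show "braid_eq n ([(j, s)] @ ascending_word c) (ascending_word c @ [(j, s)])"
        using ascending_word_commute True assms by simp
      show "braid_eq n ([(j, s)] @ inv_word (ascending_word c)) (inv_word (ascending_word c) @ [(j, s)])"
        by (rule braid_eq_letter_inv_word) (use ascending_word_commute True assms in simp)
    qed (use True assms in auto)
  next
    case False
    then have j: "1 \<le> j - 1" "j - 1 + 2 \<le> c" "c \<le> n" "j - 1 + 1 = j"
      using assms by auto
    show ?thesis
    proof (rule that)
      show "braid_eq n ([(j, s)] @ ascending_word c) (ascending_word c @ [(j - 1, s)])"
        using ascending_word_shift[OF j(1-3)] j(4) by simp
      show "braid_eq n ([(j - 1, s)] @ inv_word (ascending_word c)) (inv_word (ascending_word c) @ [(j, s)])"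
        by (rule braid_eq_letter_inv_word) (use ascending_word_shift[OF j(1-3)] j(4) in simp)
    qed (use False assms in auto)
  qed
  show ?thesis
    using braid_eq_intertwine_append[OF into braid_eq_intertwine_append[OF letter_commute[OF j'] out]]
    by (simp add: a_word_ascending)
qed

lemma a_word_far_conj:
  assumes "1 \<le> c" "c < n" "2 \<le> j" "j < n" "j \<noteq> c" "j \<noteq> c + 1"
  shows "braid_eq n ([(j, s)] @ a_word c @ [(j, \<not> s)]) (a_word c)"
proof -
  have "braid_eq n (a_word c @ [(j, s)]) ([(j, s)] @ a_word c)"
    using braid_eq.sym[OF a_word_far_commute[OF assms]] .
  then have "braid_eq n (a_word c) ([(j, s)] @ a_word c @ [(j, \<not> s)])"
    using braid_eq_shift_right[of n "[(j, s)]" "a_word c"] assms by simp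
  then show ?thesis
    by (rule braid_eq.sym)
qed

section \<open>Braids permuting the twists\<close>

(* a_(k-1) is the full twist of strand 1 around strand k; h carries it, up to conjugation in A_n,
   to the twist around the strand pi(h)(k). *)
definition permutes_twists :: "nat \<Rightarrow> bword \<Rightarrow> bool" where
  "permutes_twists n h \<longleftrightarrow> valid_word n h \<and>
     (\<forall>k \<in> {2..n}. perm_of h k \<in> {2..n} \<and>
        A_conj n (perm_of h k - 1) (h @ a_word (k - 1) @ inv_word h))"

lemma permutes_twistsD:
  "permutes_twists n h \<Longrightarrow> k \<in> {2..n} \<Longrightarrow>
     perm_of h k \<in> {2..n} \<and> A_conj n (perm_of h k - 1) (h @ a_word (k - 1) @ inv_word h)"
  by (simp add: permutes_twists_def)

lemma permutes_twists_braid_eq: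
  assumes "braid_eq n h h'" "permutes_twists n h"
  shows "permutes_twists n h'"
  unfolding permutes_twists_def
proof (intro conjI ballI)
  show "valid_word n h'"
    using assms braid_eq_valid_word by (auto simp: permutes_twists_def)
  fix k assume k: "k \<in> {2..n}"
  have "braid_eq n (h' @ a_word (k - 1) @ inv_word h') (h @ a_word (k - 1) @ inv_word h)"
    using braid_eq_append[OF braid_eq.sym[OF assms(1)]
        braid_eq_append[OF braid_eq.refl braid_eq_inv_word[OF braid_eq.sym[OF assms(1)]]]] .
  then show "perm_of h' k \<in> {2..n}"
    and "A_conj n (perm_of h' k - 1) (h' @ a_word (k - 1) @ inv_word h')"
    using permutes_twistsD[OF assms(2) k] perm_of_braid_eq[OF assms(1)] A_conj_braid_eq by auto
qed

lemma permutes_twists_if_in_A: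
  assumes "in_A n h"
  shows "permutes_twists n h"
proof -
  have "A_conj n (k - 1) (h @ a_word (k - 1) @ inv_word h)" for k
    using A_conj_conj[OF in_A_inv_word[OF assms] A_conj_a_word] by simp
  then show ?thesis
    using valid_word_if_in_A[OF assms] perm_of_if_in_A[OF assms]
    unfolding permutes_twists_def by simp
qed

lemma in_A_conj_if_permutes_twists:
  assumes h: "permutes_twists n h" and "in_A n w"
  shows "in_A n (h @ w @ inv_word h)"
proof -
  have vh: "valid_word n h"
    using h by (simp add: permutes_twists_def)
  obtain ls where ls: "valid_word n ls" and w: "braid_eq n w (A_word ls)"
    using assms(2) by (auto simp: in_A_iff)
  have "in_A n (h @ A_word ls @ inv_word h)"
    using ls
  proof (induction ls)
    case Nil
    show ?case
      using in_A_braid_eq[OF _ in_A_Nil] braid_eq_cancel_inverse[OF vh, of "[]" "[]"] by simp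
  next
    case (Cons x ls)
    obtain i s where x: "x = (i, s)" and i: "1 \<le> i" "i < n"
      using Cons.prems by (cases x) auto
    then have "perm_of h (i + 1) \<in> {2..n}" "A_conj n (perm_of h (i + 1) - 1) (h @ a_word i @ inv_word h)"
      using permutes_twistsD[OF h, of "i + 1"] i by simp_all
    then have conj: "in_A n (h @ a_word i @ inv_word h)"
      using in_A_if_A_conj[of "perm_of h (i + 1) - 1" n] by fastforce
    have "in_A n (h @ a_letter x @ inv_word h)"
      using conj in_A_inv_word[OF conj] by (cases s) (simp_all add: x)
    moreover have "in_A n (h @ A_word ls @ inv_word h)"
      using Cons x by simp
    ultimately show ?case
      using in_A_braid_eq[OF braid_eq_conj_append[OF vh] in_A_append] by simp
  qed
  then show ?thesis
    using in_A_braid_eq braid_eq_context[OF w] by blast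
qed

lemma permutes_twists_append:
  assumes h1: "permutes_twists n h1" and h2: "permutes_twists n h2"
  shows "permutes_twists n (h1 @ h2)"
  unfolding permutes_twists_def
proof (intro conjI ballI)
  have v1: "valid_word n h1"
    using h1 by (simp add: permutes_twists_def)
  then show "valid_word n (h1 @ h2)"
    using h2 by (simp add: permutes_twists_def)
  fix k assume k: "k \<in> {2..n}"
  define k' where "k' = perm_of h2 k"
  have k': "k' \<in> {2..n}" and "A_conj n (k' - 1) (h2 @ a_word (k - 1) @ inv_word h2)"
    using permutes_twistsD[OF h2 k] by (simp_all add: k'_def)
  then obtain P where P: "in_A n P"
    and conj2: "braid_eq n (h2 @ a_word (k - 1) @ inv_word h2) (inv_word P @ a_word (k' - 1) @ P)"
    by (auto simp: A_conj_def)
  have "perm_of h1 k' \<in> {2..n}" and conj1: "A_conj n (perm_of h1 k' - 1) (h1 @ a_word (k' - 1) @ inv_word h1)"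
    using permutes_twistsD[OF h1 k'] by simp_all
  then show "perm_of (h1 @ h2) k \<in> {2..n}"
    by (simp add: k'_def)
  let ?Q = "h1 @ P @ inv_word h1"
  have "braid_eq n ((h1 @ h2) @ a_word (k - 1) @ inv_word (h1 @ h2)) (h1 @ (inv_word P @ a_word (k' - 1) @ P) @ inv_word h1)"
    using braid_eq_context[OF conj2] by simp
  also have "braid_eq n \<dots> (inv_word ?Q @ (h1 @ a_word (k' - 1) @ inv_word h1) @ ?Q)"
    using braid_eq_conj_append3[OF v1] by simp
  finally show "A_conj n (perm_of (h1 @ h2) (k) - 1) ((h1 @ h2) @ a_word (k - 1) @ inv_word (h1 @ h2))"
    using A_conj_braid_eq A_conj_conj[OF in_A_conj_if_permutes_twists[OF h1 P] conj1] by (simp add: k'_def)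
qed

lemma permutes_twists_sigma:
  assumes j: "2 \<le> j" "j < n"
  shows "permutes_twists n [(j, s)]"
  unfolding permutes_twists_def
proof (intro conjI ballI)
  show "valid_word n [(j, s)]"
    using j by simp
  fix k assume k: "k \<in> {2..n}"
  then show "perm_of [(j, s)] k \<in> {2..n}"
    using j by (auto simp: transpose_def)
  define i where "i = j - 1"
  have i: "1 \<le> i" "i + 1 < n" "j = i + 1"
    using j by (auto simp: i_def)
  have in_A: "in_A n (a_word i)" "in_A n (inv_word (a_word (i + 1)))"
    using i in_A_a_word in_A_inv_word by auto
  have conj_by_a_word: "A_conj n c (inv_word Q @ a_word c @ Q)" if "in_A n Q" for c Q
    using A_conj_conj[OF that A_conj_a_word] .
  consider "k = j" | "k = j + 1" | "k \<noteq> j" "k \<noteq> j + 1"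
    by blast
  then have "A_conj n (transpose j (j + 1) k - 1) ([(j, s)] @ a_word (k - 1) @ [(j, \<not> s)])"
  proof cases
    case 1
    then have "k - 1 = i" "transpose j (j + 1) k - 1 = i + 1"
      using i by auto
    then show ?thesis
      using A_conj_braid_eq[OF sigma_conj_a_word[OF i(1,2)] conj_by_a_word[OF in_A(1)]]
        A_conj_braid_eq[OF sigma_inv_conj_a_word[OF i(1,2)] A_conj_a_word] i
      by (cases s) auto
  next
    case 2
    then have "k - 1 = i + 1" "transpose j (j + 1) k - 1 = i"
      using i by auto
    then show ?thesis
      using A_conj_braid_eq[OF sigma_conj_a_word_Suc[OF i(1,2)] A_conj_a_word]
        A_conj_braid_eq[OF sigma_inv_conj_a_word_Suc[OF i(1,2)] conj_by_a_word[OF in_A(2), unfolded inv_word_inv_word]] i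
      by (cases s) auto
  next
    case 3
    then show ?thesis
      using A_conj_braid_eq[OF a_word_far_conj[of "k - 1" n j s] A_conj_a_word] k j by fastforce
  qed
  then show "A_conj n (perm_of [(j, s)] k - 1) ([(j, s)] @ a_word (k - 1) @ inv_word [(j, s)])"
    by simp
qed

lemma in_A_ascending_conj_letters:
  assumes "1 \<le> j" "j < n"
  shows "in_A n (ascending_word j @ [(j, s), (j, t)] @ inv_word (ascending_word j))"
proof (cases "t = s")
  case True
  then show ?thesis
    using in_A_a_word[OF assms] in_A_inv_word[OF in_A_a_word[OF assms]]
    by (cases s) (simp_all add: a_word_ascending)
next
  case False
  let ?X = "ascending_word j"
  have "braid_eq n (?X @ (j, s) # (j, \<not> s) # inv_word ?X) (?X @ inv_word ?X)"
    using braid_eq_cancel_letter assms by blast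
  also have "braid_eq n \<dots> []"
    using braid_eq_cancel_inverse[OF valid_ascending_word, of j n "[]" "[]"] assms by simp
  finally show ?thesis
    using False in_A_braid_eq[OF _ in_A_Nil] by (cases t) simp_all
qed

(* The Reidemeister-Schreier generators of the stabiliser of strand 1 for the transversal
   p |-> ascending_word p: each one is in A_n or equals a single sigma_j with j >= 2. *)
lemma permutes_twists_schreier_generator:
  assumes j: "1 \<le> j" "j < n" and p': "p' \<in> {1..n}"
  shows "permutes_twists n (ascending_word (transpose j (j + 1) p') @ [(j, s)] @ inv_word (ascending_word p'))"
proof -
  have X: "valid_word n (ascending_word p')"
    using valid_ascending_word p' by simp
  consider "p' = j + 1" | "p' = j" | "j + 2 \<le> p'" | "p' < j"
    by linarith
  then show ?thesis
  proof cases
    case 1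
    then show ?thesis
      using permutes_twists_if_in_A[OF in_A_ascending_conj_letters[OF j, of s False]] j
      by (simp add: ascending_word_Suc)
  next
    case 2
    then show ?thesis
      using permutes_twists_if_in_A[OF in_A_ascending_conj_letters[OF j, of True s]] j
      by (simp add: ascending_word_Suc)
  next
    case 3
    have "braid_eq n ([(j + 1, s)] @ ascending_word p') (ascending_word p' @ [(j, s)])"
      using ascending_word_shift[OF j(1) 3] p' by simp
    then have "braid_eq n [(j + 1, s)] (ascending_word p' @ [(j, s)] @ inv_word (ascending_word p'))"
      by (rule braid_eq.sym[OF braid_eq_conj_of_intertwine[OF _ X]])
    moreover have "permutes_twists n [(j + 1, s)]"
      using permutes_twists_sigma 3 p' j by simp
    ultimately show ?thesis
      using 3 permutes_twists_braid_eq by fastforce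
  next
    case 4
    have "braid_eq n ([(j, s)] @ ascending_word p') (ascending_word p' @ [(j, s)])"
      using ascending_word_commute 4 j by simp
    then have "braid_eq n [(j, s)] (ascending_word p' @ [(j, s)] @ inv_word (ascending_word p'))"
      by (rule braid_eq.sym[OF braid_eq_conj_of_intertwine[OF _ X]])
    moreover have "permutes_twists n [(j, s)]"
      using permutes_twists_sigma 4 p' j by simp
    ultimately show ?thesis
      using 4 permutes_twists_braid_eq by fastforce
  qed
qed

(* perm_of (ascending_word p) sends p to 1, so this word fixes strand 1. *)
lemma permutes_twists_ascending_append:
  "valid_word n u \<Longrightarrow> permutes_twists n (ascending_word (perm_of u 1) @ u)"
proof (induction u)
  case Nil
  show ?case
    using permutes_twists_if_in_A[OF in_A_Nil] by (simp add: ascending_word_def)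
next
  case (Cons x u)
  obtain j s where x: "x = (j, s)" and j: "1 \<le> j" "j < n" and u: "valid_word n u"
    using Cons.prems by (cases x) auto
  let ?p' = "perm_of u 1"
  have p': "?p' \<in> {1..n}"
    using perm_of_in_range[OF u] j by simp
  have "permutes_twists n ((ascending_word (transpose j (j + 1) ?p') @ [(j, s)] @ inv_word (ascending_word ?p'))
                          @ (ascending_word ?p' @ u))"
    using permutes_twists_append[OF permutes_twists_schreier_generator[OF j p'] Cons.IH[OF u]] .
  moreover have "braid_eq n ((ascending_word (transpose j (j + 1) ?p') @ [(j, s)]) @ inv_word (ascending_word ?p') @ ascending_word ?p' @ u)
                            ((ascending_word (transpose j (j + 1) ?p') @ [(j, s)]) @ u)"
    using braid_eq_cancel_inverse'[OF valid_ascending_word] p' by (simp del: append_assoc)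
  ultimately show ?case
    using permutes_twists_braid_eq by (simp add: x)
qed

lemma permutes_twists_if_fixes_first:
  "valid_word n u \<Longrightarrow> perm_of u 1 = 1 \<Longrightarrow> permutes_twists n u"
  using permutes_twists_ascending_append by (fastforce simp: ascending_word_def)

lemma a_word_1: "a_word (Suc 0) = [(1, True), (1, True)]"
  by (simp add: a_word_def)

lemma perm_of_conj_sigma1:
  "perm_of (u @ [(1, True)] @ inv_word u) = transpose (perm_of u 1) (perm_of u 2)"
proof
  fix x
  let ?g = "perm_of u" and ?g' = "perm_of (inv_word u)"
  have inverse: "?g (?g' y) = y" "?g' (?g y) = y" for y
    using perm_of_comp_inv_word[of u] perm_of_inv_word_comp[of u] by (simp_all add: fun_eq_iff)
  have "perm_of (u @ [(1, True)] @ inv_word u) x = ?g (transpose 1 2 (?g' x))"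
    by (simp add: numeral_2_eq_2)
  also have "\<dots> = transpose (?g 1) (?g 2) x"
    by (metis inverse transpose_apply_first transpose_apply_other transpose_apply_second)
  finally show "perm_of (u @ [(1, True)] @ inv_word u) x = transpose (?g 1) (?g 2) x" .
qed

lemma braid_eq_square_conj_sigma1:
  assumes "valid_word n u" "braid_eq n b (u @ [(1, True)] @ inv_word u)"
  shows "braid_eq n (b @ b) (u @ a_word 1 @ inv_word u)"
proof -
  have "braid_eq n (b @ b) ((u @ [(1, True)]) @ inv_word u @ u @ ([(1, True)] @ inv_word u))"
    using braid_eq_append[OF assms(2) assms(2)] by simp
  also have "braid_eq n \<dots> ((u @ [(1, True)]) @ ([(1, True)] @ inv_word u))"
    using braid_eq_cancel_inverse'[OF assms(1)] .
  finally show ?thesis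
    by (simp add: a_word_1)
qed

lemma conj_a_word_1_fixing_first:
  assumes "2 \<le> n" "valid_word n u" "transpose (perm_of u 1) (perm_of u 2) = transpose 1 n"
  obtains u' where "valid_word n u'" "perm_of u' 1 = 1" "perm_of u' 2 = n"
    "braid_eq n (u @ a_word 1 @ inv_word u) (u' @ a_word 1 @ inv_word u')"
proof -
  have "perm_of (inv_word u) (perm_of u k) = k" for k
    using perm_of_inv_word_comp[of u] by (simp add: fun_eq_iff)
  then have "perm_of u 1 \<noteq> perm_of u 2"
    by (metis numeral_2_eq_2 n_not_Suc_n One_nat_def)
  then consider "perm_of u 1 = 1" "perm_of u 2 = n" | "perm_of u 1 = n" "perm_of u 2 = 1"
    using assms(3) by (metis transpose_apply_first transpose_apply_second transpose_eq_iff)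
  then show ?thesis
  proof cases
    case 1
    then show ?thesis
      using that assms(2) braid_eq.refl by blast
  next
    case 2
    show ?thesis
    proof (rule that[of "u @ [(1, True)]"])
      show "valid_word n (u @ [(1, True)])"
        using assms by simp
      show "perm_of (u @ [(1, True)]) 1 = 1" "perm_of (u @ [(1, True)]) 2 = n"
        using 2 by (simp_all add: numeral_2_eq_2)
      have "braid_eq n ((u @ [(1, True), (1, True)]) @ (1, True) # (1, \<not> True) # inv_word u)
                      ((u @ [(1, True), (1, True)]) @ inv_word u)"
        using braid_eq_cancel_letter[of 1 n "u @ [(1, True), (1, True)]" True "inv_word u"] assms(1) by simp
      then show "braid_eq n (u @ a_word 1 @ inv_word u) ((u @ [(1, True)]) @ a_word 1 @ inv_word (u @ [(1, True)]))"
        by (simp add: a_word_1 braid_eq.sym)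
    qed
  qed
qed

theorem lemma3p5:
  fixes n :: nat and b :: bword
  assumes "n \<ge> 2"
    and "half_twist n b"
    and "perm_of b = transpose 1 n"
  shows "in_A n (b @ b) \<and>
         (\<exists>P. valid_word n P \<and> in_A n P \<and>
              braid_eq n (b @ b) (inv_word P @ a_word (n - 1) @ P))"
proof -
  obtain u where u: "valid_word n u" and b: "braid_eq n b (u @ [(1, True)] @ inv_word u)"
    using assms(2) by (auto simp: half_twist_def)
  have "transpose (perm_of u 1) (perm_of u 2) = transpose 1 n"
    using perm_of_braid_eq[OF b] assms(3) unfolding perm_of_conj_sigma1 by simp
  then obtain u' where u': "valid_word n u'" "perm_of u' 1 = 1" "perm_of u' 2 = n"
    and conj: "braid_eq n (u @ a_word 1 @ inv_word u) (u' @ a_word 1 @ inv_word u')"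
    using conj_a_word_1_fixing_first assms(1) u by blast
  have "A_conj n (n - 1) (u' @ a_word 1 @ inv_word u')"
    using permutes_twistsD[OF permutes_twists_if_fixes_first[OF u'(1,2)], of 2] u'(3) assms(1) by simp
  then have "A_conj n (n - 1) (b @ b)"
    using A_conj_braid_eq braid_eq.trans[OF braid_eq_square_conj_sigma1[OF u b] conj] by blast
  then show ?thesis
    using in_A_if_A_conj[of "n - 1" n] assms(1) valid_word_if_in_A by (auto simp: A_conj_def)
qed

end
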